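(* Let $\varrho_\pm,p_\pm>0$ with $\varrho_-<\varrho_+$, and fix $\varrho_1>\varrho_+$. For $v_\pm\in\mathbb{R}$ set $u=v_--v_+$, $R=\varrho_--\varrho_+$, $A=\varrho_-v_--\varrho_+v_+$, $B=\varrho_-\varrho_+u^2-(\varrho_+-\varrho_-)(p_+-p_-)$, and, whenever $B>0$, $$\mu_0=\frac AR-\frac1R\sqrt{B\frac{\varrho_1-\varrho_+}{\varrho_1-\varrho_-}},\qquad \mu_1=\frac AR-\frac1R\sqrt{B\frac{\varrho_1-\varrho_-}{\varrho_1-\varrho_+}}.$$ Then for $u$ sufficiently large (depending only on $\varrho_\pm,p_\pm,\varrho_1$) one has $B>0$ and $$v_--\mu_0>0\qquad\text{and}\qquad \mu_1-v_+>0.$$ *)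

theory Defs
  imports Complex_Main
begin
end

theory Submission
  imports Defs
begin

text \<open>With \<open>r = \<rho>\<^sub>+ - \<rho>\<^sub>-\<close> one computes \<open>v\<^sub>- - \<mu>\<^sub>0 = (\<rho>\<^sub>+ u - \<surd>(B k\<^sub>0)) / r\<close> and
  \<open>\<mu>\<^sub>1 - v\<^sub>+ = (\<surd>(B k\<^sub>1) - \<rho>\<^sub>- u) / r\<close>, where \<open>k\<^sub>0 < 1 < k\<^sub>1\<close> are the two ratios under the
  square roots. Since \<open>B = \<rho>\<^sub>-\<rho>\<^sub>+u\<^sup>2 + O(1)\<close>, both claims reduce to comparisons of leading
  coefficients of quadratics in \<open>u\<close>: \<open>\<rho>\<^sub>-\<rho>\<^sub>+k\<^sub>0 < \<rho>\<^sub>+\<^sup>2\<close> and \<open>\<rho>\<^sub>-\<^sup>2 < \<rho>\<^sub>-\<rho>\<^sub>+k\<^sub>1\<close>.\<close>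

lemma eventually_less_quadratic_at_top:
  fixes a c :: real
  assumes "a > 0"
  shows "\<forall>\<^sub>F u in at_top. c < a * u\<^sup>2"
proof -
  have "filterlim (\<lambda>u::real. a * u\<^sup>2) at_top at_top"
    using assms by (intro filterlim_tendsto_pos_mult_at_top filterlim_pow_at_top filterlim_ident) auto
  then have "\<forall>\<^sub>F u in at_top. c + 1 \<le> a * u\<^sup>2"
    by (simp add: filterlim_at_top)
  then show ?thesis
    by eventually_elim simp
qed

lemma left_velocity_minus_speed:
  fixes rho_m rho_p v_m v_p s :: real
  assumes "rho_m \<noteq> rho_p"
  shows "v_m - ((rho_m * v_m - rho_p * v_p) / (rho_m - rho_p) - (1 / (rho_m - rho_p)) * s)
    = (s - rho_p * (v_m - v_p)) / (rho_m - rho_p)"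
  using assms by (simp add: divide_simps) (simp add: algebra_simps)

lemma speed_minus_right_velocity:
  fixes rho_m rho_p v_m v_p s :: real
  assumes "rho_m \<noteq> rho_p"
  shows "(rho_m * v_m - rho_p * v_p) / (rho_m - rho_p) - (1 / (rho_m - rho_p)) * s - v_p
    = (rho_m * (v_m - v_p) - s) / (rho_m - rho_p)"
  using assms by (simp add: divide_simps) (simp add: algebra_simps)

lemma eventually_sqrt_bounds_at_top:
  fixes rho_m rho_p c k0 k1 :: real
  assumes "0 < rho_m" "rho_m < rho_p" "0 < k0" "k0 < 1" "1 < k1"
  defines "B \<equiv> \<lambda>u. rho_m * rho_p * u\<^sup>2 - c"
  shows "\<forall>\<^sub>F u in at_top. B u > 0 \<and> sqrt (B u * k0) < rho_p * u \<and> rho_m * u < sqrt (B u * k1)"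
proof -
  have "rho_m * k0 < rho_p * 1" and "rho_m * 1 < rho_p * k1"
    using assms by (intro mult_strict_mono'; simp)+
  then have pos: "0 < rho_m * rho_p" "0 < rho_p * (rho_p - k0 * rho_m)" "0 < rho_m * (k1 * rho_p - rho_m)"
    using assms by (simp_all add: algebra_simps)
  have "\<forall>\<^sub>F u in at_top. c < rho_m * rho_p * u\<^sup>2 \<and> - k0 * c < rho_p * (rho_p - k0 * rho_m) * u\<^sup>2
      \<and> k1 * c < rho_m * (k1 * rho_p - rho_m) * u\<^sup>2 \<and> 0 < u"
    using pos by (intro eventually_conj eventually_less_quadratic_at_top eventually_gt_at_top)
  then show ?thesis
  proof eventually_elim
    case (elim u)
    then have "B u > 0" "B u * k0 < (rho_p * u)\<^sup>2" "(rho_m * u)\<^sup>2 < B u * k1"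
      by (simp_all add: B_def algebra_simps power_mult_distrib power2_eq_square)
    moreover have "0 \<le> rho_p * u"
      using elim assms by simp
    ultimately show ?case
      by (simp add: real_less_lsqrt real_less_rsqrt)
  qed
qed

theorem lemma6p1:
  fixes rho_m rho_p p_m p_p rho1 :: real
  assumes "rho_m > 0" "rho_p > 0" "p_m > 0" "p_p > 0"
    and "rho_m < rho_p" and "rho1 > rho_p"
  shows "\<exists>U::real. \<forall>v_m v_p :: real. v_m - v_p \<ge> U \<longrightarrow>
    (let u = v_m - v_p;
         R = rho_m - rho_p;
         A = rho_m * v_m - rho_p * v_p;
         B = rho_m * rho_p * u^2 - (rho_p - rho_m) * (p_p - p_m);
         mu0 = A / R - (1 / R) * sqrt (B * ((rho1 - rho_p) / (rho1 - rho_m)));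
         mu1 = A / R - (1 / R) * sqrt (B * ((rho1 - rho_m) / (rho1 - rho_p)))
     in B > 0 \<and> v_m - mu0 > 0 \<and> mu1 - v_p > 0)"
proof -
  define k0 where "k0 = (rho1 - rho_p) / (rho1 - rho_m)"
  define k1 where "k1 = (rho1 - rho_m) / (rho1 - rho_p)"
  define B where "B = (\<lambda>u. rho_m * rho_p * u\<^sup>2 - (rho_p - rho_m) * (p_p - p_m))"
  have "0 < k0" "k0 < 1" "1 < k1"
    using assms by (simp_all add: k0_def k1_def divide_simps)
  then obtain U where U: "\<And>u. u \<ge> U \<Longrightarrow>
      B u > 0 \<and> sqrt (B u * k0) < rho_p * u \<and> rho_m * u < sqrt (B u * k1)"
    using eventually_sqrt_bounds_at_top[of rho_m rho_p k0 k1] assms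
    unfolding B_def eventually_at_top_linorder by blast
  have "rho_m \<noteq> rho_p" "rho_m - rho_p < 0"
    using assms by simp_all
  with U show ?thesis
    unfolding Let_def left_velocity_minus_speed[OF \<open>rho_m \<noteq> rho_p\<close>]
      speed_minus_right_velocity[OF \<open>rho_m \<noteq> rho_p\<close>]
    by (auto simp: B_def k0_def k1_def zero_less_divide_iff)
qed

end
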